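(* Fix $s\in\mathbb C^n$, let $\hat y\in\hat{\mathbb Y}(s)$ and $\beta=\beta(\hat y)$. Consider the equation $B\theta=\beta+2\pi k$ in unknowns $\theta\in\mathbb R^n$ and integer vector $k\in\mathbb Z^m$. Then: (1) For $\theta\in(-\pi,\pi]^n$, $h_\theta(\hat y)\in\mathbb X(s)$ if and only if there exists $k\in\mathbb Z^m$ such that $(\theta,k)$ solves $B\theta=\beta+2\pi k$. (2) If the equation $B\theta=\beta+2\pi k$ has a solution, then there is a solution $(\theta,k)$ with $\theta\in(-\pi,\pi]^n$, and the set of all solutions $(\theta',k')\in\mathbb R^n\times\mathbb Z^m$ equals $\sigma(\theta,k):=\{(\theta+2\pi\alpha,\,k+B\alpha):\alpha\in\mathbb Z^n\}$; in particular there is at most one such equivalence class of solutions.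
   Context: $G=(N,E)$ is a directed graph with nodes $N=\{0,1,\dots,n\}$ and $m=|E|$ links, whose underlying undirected graph is connected; $(i,j)\in E$ denotes a link from $i$ to $j$. Each link has impedance $z_{ij}=r_{ij}+\mathbf{i}x_{ij}$, each node $i$ shunt admittance $y_i=g_i-\mathbf{i}b_i$. The voltage $V_0$ at node 0 is given and taken as angle reference: $V_0=|V_0|$ real and positive; $v_0:=|V_0|^2$. $\mathbb X(s)$ (for $s=(s_1,\dots,s_n)\in\mathbb C^n$) is the set of $x=(S,I,V,s_0)$ with $S,I\in\mathbb C^E$, $V=(V_1,\dots,V_n)$, $s_0\in\mathbb C$ satisfying $V_i-V_j=z_{ij}I_{ij}$, $S_{ij}=V_iI_{ij}^*$ for $(i,j)\in E$, and $\sum_{k:(j,k)\in E}S_{jk}-\sum_{i:(i,j)\in E}(S_{ij}-z_{ij}|I_{ij}|^2)+y_j^*|V_j|^2=s_j$ for $j\in N$. $\hat{\mathbb Y}(s)$ is the set of real $\hat y=(P,Q,\ell,v,p_0,q_0)$ ($P,Q,\ell$ indexed by $E$, $v=(v_1,\dots,v_n)$), with $S_{ij}:=P_{ij}+\mathbf{i}Q_{ij}$ and $s_j=p_j+\mathbf{i}q_j$, satisfying $p_j=\sum_{k:(j,k)\in E}P_{jk}-\sum_{i:(i,j)\in E}(P_{ij}-r_{ij}\ell_{ij})+g_jv_j$, $q_j=\sum_{k:(j,k)\in E}Q_{jk}-\sum_{i:(i,j)\in E}(Q_{ij}-x_{ij}\ell_{ij})+b_jv_j$ for $j\in N$, and $v_j=v_i-2(r_{ij}P_{ij}+x_{ij}Q_{ij})+(r_{ij}^2+x_{ij}^2)\ell_{ij}$,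 $\ell_{ij}=(P_{ij}^2+Q_{ij}^2)/v_i$ for $(i,j)\in E$. $B$ is the $m\times n$ reduced incidence matrix: $B_{ei}=1$ if link $e$ leaves node $i$, $-1$ if it enters $i$, $0$ otherwise ($e\in E$, $i=1,\dots,n$). $\beta=\beta(\hat y)\in(-\pi,\pi]^m$ with $\beta_{ij}=\angle(v_i-z_{ij}^*S_{ij})$. For $\theta\in(-\pi,\pi]^n$ (and $\theta_0:=0$), $h_\theta(\hat y)=(S,I,V,s_0)$ with $S_{ij}=P_{ij}+\mathbf{i}Q_{ij}$, $I_{ij}=\sqrt{\ell_{ij}}e^{\mathbf{i}(\theta_i-\angle S_{ij})}$, $V_i=\sqrt{v_i}e^{\mathbf{i}\theta_i}$, $s_0=p_0+\mathbf{i}q_0$. *)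

theory Defs
  imports Complex_Main
begin

text \<open>Nodes are 0..n; links are pairs (i,j) of nodes (no self-loops).
  Node vectors (V, v, theta, s, alpha) are functions on nat, only the entries 1..n matter;
  node 0 is handled separately (V_0 = |V_0|, v_0 = |V_0|^2, theta_0 = 0).
  Link vectors are functions on nat \<times> nat, only entries in E matter.\<close>

definition valid_graph :: "nat \<Rightarrow> (nat \<times> nat) set \<Rightarrow> bool" where
  "valid_graph n E \<longleftrightarrow> E \<subseteq> {(i,j). i \<le> n \<and> j \<le> n \<and> i \<noteq> j}
      \<and> (\<forall>i\<in>{0..n}. (0, i) \<in> (E \<union> E\<inverse>)\<^sup>*)"

text \<open>Reduced incidence matrix B (m x n), columns indexed by nodes 1..n.\<close>
definition inc :: "nat \<times> nat \<Rightarrow> nat \<Rightarrow> int" where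
  "inc e i = (if fst e = i then 1 else if snd e = i then -1 else 0)"

definition Bmul :: "nat \<Rightarrow> (nat \<Rightarrow> 'a::comm_ring_1) \<Rightarrow> nat \<times> nat \<Rightarrow> 'a" where
  "Bmul n th e = (\<Sum>i\<in>{1..n}. of_int (inc e i) * th i)"

definition ext0 :: "'a \<Rightarrow> (nat \<Rightarrow> 'a) \<Rightarrow> nat \<Rightarrow> 'a" where
  "ext0 a f i = (if i = 0 then a else f i)"

definition Xset :: "nat \<Rightarrow> (nat \<times> nat) set \<Rightarrow> (nat \<times> nat \<Rightarrow> complex) \<Rightarrow> (nat \<Rightarrow> complex)
    \<Rightarrow> real \<Rightarrow> (nat \<Rightarrow> complex)
    \<Rightarrow> (nat \<times> nat \<Rightarrow> complex) \<Rightarrow> (nat \<times> nat \<Rightarrow> complex) \<Rightarrow> (nat \<Rightarrow> complex) \<Rightarrow> complex \<Rightarrow> bool" where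
  "Xset n E z y V0 s S I V s0 \<longleftrightarrow>
     (let Vt = ext0 (complex_of_real V0) V; st = ext0 s0 s in
      (\<forall>(i,j)\<in>E. Vt i - Vt j = z (i,j) * I (i,j) \<and> S (i,j) = Vt i * cnj (I (i,j))) \<and>
      (\<forall>j\<in>{0..n}.
         (\<Sum>e\<in>{e\<in>E. fst e = j}. S e)
         - (\<Sum>e\<in>{e\<in>E. snd e = j}. S e - z e * complex_of_real ((cmod (I e))\<^sup>2))
         + cnj (y j) * complex_of_real ((cmod (Vt j))\<^sup>2) = st j))"

text \<open>The set Yhat(s): yhat = (P, Q, l, v, p0, q0), with r = Re z, x = Im z,
  g = Re y, b = - Im y (since y = g - i b), v_0 = V0^2.  The squared voltage
  magnitudes v_1..v_n are required to be positive (implicit in the paper: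
  l_ij = (P^2+Q^2)/v_i and sqrt v_i).\<close>
definition Yhat :: "nat \<Rightarrow> (nat \<times> nat) set \<Rightarrow> (nat \<times> nat \<Rightarrow> complex) \<Rightarrow> (nat \<Rightarrow> complex)
    \<Rightarrow> real \<Rightarrow> (nat \<Rightarrow> complex)
    \<Rightarrow> (nat \<times> nat \<Rightarrow> real) \<Rightarrow> (nat \<times> nat \<Rightarrow> real) \<Rightarrow> (nat \<times> nat \<Rightarrow> real)
    \<Rightarrow> (nat \<Rightarrow> real) \<Rightarrow> real \<Rightarrow> real \<Rightarrow> bool" where
  "Yhat n E z y V0 s P Q l v p0 q0 \<longleftrightarrow>
     (let vt = ext0 (V0\<^sup>2) v; pt = ext0 p0 (\<lambda>j. Re (s j)); qt = ext0 q0 (\<lambda>j. Im (s j)) in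
      (\<forall>j\<in>{1..n}. v j > 0) \<and>
      (\<forall>j\<in>{0..n}.
         pt j = (\<Sum>e\<in>{e\<in>E. fst e = j}. P e) - (\<Sum>e\<in>{e\<in>E. snd e = j}. P e - Re (z e) * l e)
                + Re (y j) * vt j \<and>
         qt j = (\<Sum>e\<in>{e\<in>E. fst e = j}. Q e) - (\<Sum>e\<in>{e\<in>E. snd e = j}. Q e - Im (z e) * l e)
                + (- Im (y j)) * vt j) \<and>
      (\<forall>(i,j)\<in>E.
         vt j = vt i - 2 * (Re (z (i,j)) * P (i,j) + Im (z (i,j)) * Q (i,j))
                + ((Re (z (i,j)))\<^sup>2 + (Im (z (i,j)))\<^sup>2) * l (i,j) \<and>
         l (i,j) = ((P (i,j))\<^sup>2 + (Q (i,j))\<^sup>2) / vt i))"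

definition beta :: "(nat \<times> nat \<Rightarrow> complex) \<Rightarrow> real \<Rightarrow> (nat \<times> nat \<Rightarrow> real) \<Rightarrow> (nat \<times> nat \<Rightarrow> real)
    \<Rightarrow> (nat \<Rightarrow> real) \<Rightarrow> nat \<times> nat \<Rightarrow> real" where
  "beta z V0 P Q v e =
     Arg (complex_of_real (ext0 (V0\<^sup>2) v (fst e)) - cnj (z e) * Complex (P e) (Q e))"

definition hS :: "(nat \<times> nat \<Rightarrow> real) \<Rightarrow> (nat \<times> nat \<Rightarrow> real) \<Rightarrow> nat \<times> nat \<Rightarrow> complex" where
  "hS P Q e = Complex (P e) (Q e)"

definition hI :: "(nat \<Rightarrow> real) \<Rightarrow> (nat \<times> nat \<Rightarrow> real) \<Rightarrow> (nat \<times> nat \<Rightarrow> real) \<Rightarrow> (nat \<times> nat \<Rightarrow> real)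
    \<Rightarrow> nat \<times> nat \<Rightarrow> complex" where
  "hI th P Q l e = complex_of_real (sqrt (l e)) * cis (ext0 0 th (fst e) - Arg (Complex (P e) (Q e)))"

definition hV :: "(nat \<Rightarrow> real) \<Rightarrow> (nat \<Rightarrow> real) \<Rightarrow> nat \<Rightarrow> complex" where
  "hV th v i = complex_of_real (sqrt (v i)) * cis (th i)"

definition hs0 :: "real \<Rightarrow> real \<Rightarrow> complex" where
  "hs0 p0 q0 = Complex p0 q0"

definition solves :: "nat \<Rightarrow> (nat \<times> nat) set \<Rightarrow> (nat \<times> nat \<Rightarrow> real) \<Rightarrow> (nat \<Rightarrow> real)
    \<Rightarrow> (nat \<times> nat \<Rightarrow> int) \<Rightarrow> bool" where
  "solves n E bt th k \<longleftrightarrow> (\<forall>e\<in>E. Bmul n th e = bt e + 2 * pi * of_int (k e))"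

end

theory Submission
  imports Defs
begin

text \<open>On a link (i,j) the relations l = |S|^2 / v_i and v_j = v_i - 2 Re (z S^*) + |z|^2 l
  say that |v_i - z^* S|^2 = v_i v_j.  With V_i = sqrt v_i e^(i theta_i) and I as in h_theta
  this gives V_i - z I = sqrt v_j e^(i (theta_i - beta_ij)), so Ohm's law V_i - V_j = z I holds
  iff theta_i - theta_j = beta_ij (mod 2 pi); the remaining equations of X(s) hold for
  h_theta(yhat) automatically.  Two solutions of B theta = beta + 2 pi k differ by a multiple of
  2 pi at the reference node, hence, along the links of the connected graph, at every node;
  reducing a solution modulo 2 pi moves it into (-pi, pi]^n.\<close>

lemma sending_voltage_minus_drop:
  fixes va vb ta l :: real and S z :: complex
  assumes va: "va > 0" and l: "l = (cmod S)\<^sup>2 / va"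
    and vb_eq: "vb = va - 2 * Re (z * cnj S) + (cmod z)\<^sup>2 * l"
  shows "sqrt va * cis ta - z * (sqrt l * cis (ta - Arg S))
           = sqrt vb * cis (ta - Arg (va - cnj z * S))"
proof -
  define u where "u = va - cnj z * S"
  have norm_u: "cmod u = sqrt va * sqrt vb"
  proof -
    have "(cmod u)\<^sup>2 = va * vb"
      using va unfolding u_def vb_eq l cmod_power2 by (simp add: field_simps power2_eq_square)
    then show ?thesis
      by (metis norm_ge_zero real_sqrt_mult real_sqrt_unique)
  qed
  have sqrt_l: "sqrt l = cmod S / sqrt va"
    using l va by (simp add: real_sqrt_divide)
  have va_div: "complex_of_real va / sqrt va = sqrt va"
  proof -
    have "va / sqrt va = sqrt va"
      using va by (simp add: real_div_sqrt)
    then show ?thesis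
      by (metis of_real_divide)
  qed
  have "sqrt va * cis ta - z * (sqrt l * cis (ta - Arg S))
          = cis ta * (va / sqrt va) - cis ta * z * (cmod S * cis (- Arg S)) / sqrt va"
    using cis_mult [of ta "- Arg S"] by (simp add: va_div sqrt_l mult_ac)
  also have "\<dots> = cis ta / sqrt va * (va - z * rcis (cmod S) (- Arg S))"
    by (simp add: rcis_def right_diff_distrib)
  also have "\<dots> = cis ta / sqrt va * rcis (cmod u) (- Arg u)"
    by (simp add: rcis_cnj [symmetric] u_def)
  also have "\<dots> = sqrt vb * cis (ta - Arg u)"
    using va cis_mult [of ta "- Arg u"] by (simp add: norm_u rcis_def)
  finally show ?thesis
    by (simp add: u_def)
qed

lemma voltage_drop_eq_iff:
  fixes va vb ta tb l :: real and S z :: complex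
  assumes va: "va > 0" and vb: "vb > 0" and l: "l = (cmod S)\<^sup>2 / va"
    and vb_eq: "vb = va - 2 * Re (z * cnj S) + (cmod z)\<^sup>2 * l"
  shows "sqrt va * cis ta - sqrt vb * cis tb = z * (sqrt l * cis (ta - Arg S))
           \<longleftrightarrow> (\<exists>k::int. ta - tb = Arg (va - cnj z * S) + 2 * pi * k)"
proof -
  have "sqrt va * cis ta - sqrt vb * cis tb = z * (sqrt l * cis (ta - Arg S))
          \<longleftrightarrow> sqrt vb * cis (ta - Arg (va - cnj z * S)) = sqrt vb * cis tb"
    using sending_voltage_minus_drop [OF va l vb_eq, of ta] by (auto simp: algebra_simps)
  also have "\<dots> \<longleftrightarrow> cis (ta - Arg (va - cnj z * S)) = cis tb"
    using vb by simp
  also have "\<dots> \<longleftrightarrow> (\<exists>k::int. ta - tb = Arg (va - cnj z * S) + 2 * pi * k)"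
    using sin_cos_eq_iff [of "ta - Arg (va - cnj z * S)" tb]
    by (auto simp: complex_eq_iff algebra_simps)
  finally show ?thesis .
qed

lemma valid_graph_edge:
  assumes "valid_graph n E" and "(a, b) \<in> E"
  shows "a \<le> n" "b \<le> n" "a \<noteq> b"
  using assms unfolding valid_graph_def by auto

lemma Bmul_edge:
  assumes "valid_graph n E" and "(a, b) \<in> E"
  shows "Bmul n th (a, b) = ext0 0 th a - ext0 0 th b"
proof -
  note ab = valid_graph_edge [OF assms]
  have "Bmul n th (a, b) = (\<Sum>i\<in>{1..n}. (if i = a then th i else 0) - (if i = b then th i else 0))"
    unfolding Bmul_def by (rule sum.cong) (use ab in \<open>auto simp: inc_def\<close>)
  also have "\<dots> = ext0 0 th a - ext0 0 th b"
    using ab by (simp add: sum_subtractf ext0_def)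
  finally show ?thesis .
qed

lemma Bmul_shift:
  assumes "\<forall>i\<in>{1..n}. th' i = th i + 2 * pi * of_int (\<alpha> i)"
  shows "Bmul n th' e = Bmul n th e + 2 * pi * of_int (Bmul n \<alpha> e)"
proof -
  have "Bmul n th' e = (\<Sum>i\<in>{1..n}. of_int (inc e i) * th i + 2 * pi * (of_int (inc e i) * of_int (\<alpha> i)))"
    unfolding Bmul_def by (rule sum.cong) (auto simp: assms algebra_simps)
  then show ?thesis
    by (simp add: Bmul_def sum.distrib sum_distrib_left)
qed

lemma solves_shift:
  assumes "solves n E bt th k" and "\<forall>i\<in>{1..n}. th' i = th i + 2 * pi * of_int (\<alpha> i)"
  shows "solves n E bt th' (\<lambda>e. k e + Bmul n \<alpha> e)"
  using assms Bmul_shift [OF assms(2)] unfolding solves_def by (simp add: algebra_simps)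

lemma solves_winding_unique:
  assumes "solves n E bt th k" and "solves n E bt th k'" and "e \<in> E"
  shows "k' e = k e"
  using assms unfolding solves_def by simp

lemma Ints_along_undirected_path:
  assumes "\<And>a b. (a, b) \<in> E \<Longrightarrow> d a - d b \<in> \<int>"
    and "(u, w) \<in> (E \<union> E\<inverse>)\<^sup>*" and "d u \<in> \<int>"
  shows "d w \<in> \<int>"
  using assms(2,3)
proof (induction rule: rtrancl_induct)
  case (step a b)
  then have "(a, b) \<in> E \<or> (b, a) \<in> E" and "d a \<in> \<int>"
    by auto
  moreover have "d b = d a - (d a - d b)" "d b = d a + (d b - d a)"
    by simp_all
  ultimately show ?case
    by (metis Ints_add Ints_diff assms(1))
qed

lemma solves_differ_by_shift:
  assumes graph: "valid_graph n E"
    and sol: "solves n E bt th k" and sol': "solves n E bt th' k'"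
  obtains \<alpha> :: "nat \<Rightarrow> int"
  where "\<forall>i\<in>{1..n}. th' i = th i + 2 * pi * of_int (\<alpha> i)"
    and "\<forall>e\<in>E. k' e = k e + Bmul n \<alpha> e"
proof -
  define d where "d x = (ext0 0 th' x - ext0 0 th x) / (2 * pi)" for x
  have "d a - d b \<in> \<int>" if "(a, b) \<in> E" for a b
  proof -
    have "Bmul n th' (a, b) - Bmul n th (a, b) = 2 * pi * of_int (k' (a, b) - k (a, b))"
      using sol sol' that unfolding solves_def by (simp add: algebra_simps)
    moreover have "d a - d b = (Bmul n th' (a, b) - Bmul n th (a, b)) / (2 * pi)"
      by (simp add: Bmul_edge [OF graph that] d_def diff_divide_distrib)
    ultimately show ?thesis
      by simp
  qed
  moreover have "(0, i) \<in> (E \<union> E\<inverse>)\<^sup>*" if "i \<in> {1..n}" for i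
    using graph that unfolding valid_graph_def by auto
  moreover have "d 0 \<in> \<int>"
    by (simp add: d_def ext0_def)
  ultimately have "\<forall>i\<in>{1..n}. \<exists>m::int. d i = of_int m"
    by (metis Ints_along_undirected_path Ints_cases)
  then obtain \<alpha> :: "nat \<Rightarrow> int" where "\<forall>i\<in>{1..n}. d i = of_int (\<alpha> i)"
    by metis
  then have shift: "\<forall>i\<in>{1..n}. th' i = th i + 2 * pi * of_int (\<alpha> i)"
    by (auto simp: d_def ext0_def field_simps)
  have "\<forall>e\<in>E. k' e = k e + Bmul n \<alpha> e"
    using solves_winding_unique [OF solves_shift [OF sol shift] sol'] by simp
  with shift that show ?thesis
    by blast
qed

lemma solves_iff_shift:
  assumes "valid_graph n E" and "solves n E bt th k"
  shows "solves n E bt th' k' \<longleftrightarrow>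
           (\<exists>\<alpha> :: nat \<Rightarrow> int. (\<forall>i\<in>{1..n}. th' i = th i + 2 * pi * of_int (\<alpha> i))
                           \<and> (\<forall>e\<in>E. k' e = k e + Bmul n \<alpha> e))"
  using solves_differ_by_shift [OF assms] solves_shift [OF assms(2)]
  by (metis (no_types, lifting) solves_def)

lemma solves_principal_angles:
  assumes "solves n E bt th0 k0"
  obtains th k where "solves n E bt th k" and "\<forall>i\<in>{1..n}. - pi < th i \<and> th i \<le> pi"
proof -
  define th where "th i = Arg (cis (th0 i))" for i
  have "cis (th i) = cis (th0 i)" for i
    using cis_Arg [of "cis (th0 i)"] by (simp add: th_def)
  then have "\<forall>i\<in>{1..n}. \<exists>m::int. th i = th0 i + 2 * pi * of_int m"
    using sin_cos_eq_iff by (auto simp: complex_eq_iff)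
  then obtain \<alpha> :: "nat \<Rightarrow> int" where "\<forall>i\<in>{1..n}. th i = th0 i + 2 * pi * of_int (\<alpha> i)"
    by metis
  from solves_shift [OF assms this] that show ?thesis
    using Arg_bounded by (auto simp: th_def)
qed

context
  fixes n :: nat and E :: "(nat \<times> nat) set"
    and z :: "nat \<times> nat \<Rightarrow> complex" and y :: "nat \<Rightarrow> complex"
    and V0 :: real and s :: "nat \<Rightarrow> complex"
    and P Q l :: "nat \<times> nat \<Rightarrow> real" and v :: "nat \<Rightarrow> real" and p0 q0 :: real
  assumes graph: "valid_graph n E"
    and V0_pos: "V0 > 0"
    and yhat: "Yhat n E z y V0 s P Q l v p0 q0"
begin

lemma Yhat_v_pos: "j \<le> n \<Longrightarrow> 0 < ext0 (V0\<^sup>2) v j"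
  using yhat V0_pos unfolding Yhat_def by (auto simp: ext0_def Let_def)

lemma Yhat_link:
  assumes "(a, b) \<in> E"
  shows "l (a, b) = (cmod (hS P Q (a, b)))\<^sup>2 / ext0 (V0\<^sup>2) v a"
    and "ext0 (V0\<^sup>2) v b = ext0 (V0\<^sup>2) v a - 2 * Re (z (a, b) * cnj (hS P Q (a, b)))
                           + (cmod (z (a, b)))\<^sup>2 * l (a, b)"
  using yhat assms unfolding Yhat_def Let_def
  by (fastforce simp: hS_def cmod_power2)+

lemma Yhat_balance:
  assumes "j \<in> {0..n}"
  shows "(\<Sum>e\<in>{e\<in>E. fst e = j}. hS P Q e)
           - (\<Sum>e\<in>{e\<in>E. snd e = j}. hS P Q e - z e * l e)
           + cnj (y j) * ext0 (V0\<^sup>2) v j = ext0 (hs0 p0 q0) s j"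
proof -
  have "ext0 p0 (\<lambda>j. Re (s j)) j = (\<Sum>e\<in>{e\<in>E. fst e = j}. P e)
          - (\<Sum>e\<in>{e\<in>E. snd e = j}. P e - Re (z e) * l e) + Re (y j) * ext0 (V0\<^sup>2) v j"
    and "ext0 q0 (\<lambda>j. Im (s j)) j = (\<Sum>e\<in>{e\<in>E. fst e = j}. Q e)
          - (\<Sum>e\<in>{e\<in>E. snd e = j}. Q e - Im (z e) * l e) + (- Im (y j)) * ext0 (V0\<^sup>2) v j"
    using yhat assms unfolding Yhat_def Let_def by auto
  moreover have "Re (ext0 (hs0 p0 q0) s j) = ext0 p0 (\<lambda>j. Re (s j)) j"
    and "Im (ext0 (hs0 p0 q0) s j) = ext0 q0 (\<lambda>j. Im (s j)) j"
    by (simp_all add: ext0_def hs0_def)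
  ultimately show ?thesis
    by (simp add: complex_eq_iff hS_def)
qed

lemma hV_polar: "ext0 (complex_of_real V0) (hV th v) j = sqrt (ext0 (V0\<^sup>2) v j) * cis (ext0 0 th j)"
  using V0_pos by (simp add: ext0_def hV_def)

lemma norm_hI_squared:
  assumes "(a, b) \<in> E"
  shows "(cmod (hI th P Q l (a, b)))\<^sup>2 = l (a, b)"
proof -
  have "0 \<le> l (a, b)"
    using Yhat_link (1) [OF assms] Yhat_v_pos [of a] valid_graph_edge [OF graph assms] by simp
  then show ?thesis
    by (simp add: hI_def norm_mult)
qed

lemma hS_eq_hV_cnj_hI:
  assumes "(a, b) \<in> E"
  shows "hS P Q (a, b) = ext0 (complex_of_real V0) (hV th v) a * cnj (hI th P Q l (a, b))"
proof -
  define S where "S = hS P Q (a, b)"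
  define va where "va = ext0 (V0\<^sup>2) v a"
  have "va > 0"
    using Yhat_v_pos valid_graph_edge [OF graph assms] by (simp add: va_def)
  moreover have "l (a, b) = (cmod S)\<^sup>2 / va"
    using Yhat_link (1) [OF assms] by (simp add: S_def va_def)
  ultimately have "sqrt va * sqrt (l (a, b)) = cmod S"
    by (simp add: real_sqrt_mult [symmetric])
  have "ext0 (complex_of_real V0) (hV th v) a * cnj (hI th P Q l (a, b))
          = (sqrt va * sqrt (l (a, b))) * (cis (ext0 0 th a) * cis (Arg S - ext0 0 th a))"
    by (simp add: hV_polar hI_def cis_cnj S_def va_def hS_def mult_ac)
  also have "\<dots> = rcis (cmod S) (Arg S)"
    by (simp add: \<open>sqrt va * sqrt (l (a, b)) = cmod S\<close> cis_mult rcis_def)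
  finally show ?thesis
    by (simp add: rcis_cmod_Arg S_def)
qed

lemma h_balance:
  assumes "j \<in> {0..n}"
  shows "(\<Sum>e\<in>{e\<in>E. fst e = j}. hS P Q e)
           - (\<Sum>e\<in>{e\<in>E. snd e = j}. hS P Q e - z e * complex_of_real ((cmod (hI th P Q l e))\<^sup>2))
           + cnj (y j) * complex_of_real ((cmod (ext0 (complex_of_real V0) (hV th v) j))\<^sup>2)
         = ext0 (hs0 p0 q0) s j"
proof -
  have "(\<Sum>e\<in>{e\<in>E. snd e = j}. hS P Q e - z e * complex_of_real ((cmod (hI th P Q l e))\<^sup>2))
          = (\<Sum>e\<in>{e\<in>E. snd e = j}. hS P Q e - z e * l e)"
    by (rule sum.cong) (auto simp: norm_hI_squared simp del: of_real_power)
  moreover have "(cmod (ext0 (complex_of_real V0) (hV th v) j))\<^sup>2 = ext0 (V0\<^sup>2) v j"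
    using Yhat_v_pos [of j] assms by (simp add: hV_polar norm_mult)
  ultimately show ?thesis
    using Yhat_balance [OF assms] by simp
qed

lemma ohm_law_h_iff:
  assumes "(a, b) \<in> E"
  shows "ext0 (complex_of_real V0) (hV th v) a - ext0 (complex_of_real V0) (hV th v) b
           = z (a, b) * hI th P Q l (a, b)
         \<longleftrightarrow> (\<exists>k::int. Bmul n th (a, b) = beta z V0 P Q v (a, b) + 2 * pi * k)"
proof -
  note ab = valid_graph_edge [OF graph assms]
  show ?thesis
    unfolding hV_polar hI_def Bmul_edge [OF graph assms] beta_def fst_conv
    using voltage_drop_eq_iff [OF Yhat_v_pos [OF ab(1)] Yhat_v_pos [OF ab(2)] Yhat_link [OF assms]]
    by (simp add: hS_def)
qed

lemma Xset_h_iff_solves: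
  "Xset n E z y V0 s (hS P Q) (hI th P Q l) (hV th v) (hs0 p0 q0)
     \<longleftrightarrow> (\<exists>k. solves n E (beta z V0 P Q v) th k)"
proof -
  have "Xset n E z y V0 s (hS P Q) (hI th P Q l) (hV th v) (hs0 p0 q0) \<longleftrightarrow>
      (\<forall>(a, b)\<in>E. ext0 (complex_of_real V0) (hV th v) a - ext0 (complex_of_real V0) (hV th v) b
                     = z (a, b) * hI th P Q l (a, b))"
    unfolding Xset_def Let_def using hS_eq_hV_cnj_hI h_balance by auto
  also have "\<dots> \<longleftrightarrow> (\<forall>e\<in>E. \<exists>k::int. Bmul n th e = beta z V0 P Q v e + 2 * pi * k)"
    using ohm_law_h_iff by auto
  also have "\<dots> \<longleftrightarrow> (\<exists>k. solves n E (beta z V0 P Q v) th k)"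
    unfolding solves_def by (rule bchoice_iff)
  finally show ?thesis .
qed

end

theorem lemma1:
  fixes n :: nat and E :: "(nat \<times> nat) set"
    and z :: "nat \<times> nat \<Rightarrow> complex" and y :: "nat \<Rightarrow> complex"
    and V0 :: real and s :: "nat \<Rightarrow> complex"
    and P Q l :: "nat \<times> nat \<Rightarrow> real" and v :: "nat \<Rightarrow> real" and p0 q0 :: real
  assumes graph: "valid_graph n E"
    and V0_pos: "V0 > 0"
    and yhat: "Yhat n E z y V0 s P Q l v p0 q0"
  shows
    "(\<forall>th :: nat \<Rightarrow> real. (\<forall>i\<in>{1..n}. - pi < th i \<and> th i \<le> pi) \<longrightarrow>
        (Xset n E z y V0 s (hS P Q) (hI th P Q l) (hV th v) (hs0 p0 q0) \<longleftrightarrow>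
         (\<exists>k :: nat \<times> nat \<Rightarrow> int. solves n E (beta z V0 P Q v) th k)))
     \<and>
     ((\<exists>th k. solves n E (beta z V0 P Q v) th k) \<longrightarrow>
        (\<exists>th k. solves n E (beta z V0 P Q v) th k \<and> (\<forall>i\<in>{1..n}. - pi < th i \<and> th i \<le> pi) \<and>
           (\<forall>(th' :: nat \<Rightarrow> real) (k' :: nat \<times> nat \<Rightarrow> int).
              solves n E (beta z V0 P Q v) th' k' \<longleftrightarrow>
              (\<exists>\<alpha> :: nat \<Rightarrow> int.
                 (\<forall>i\<in>{1..n}. th' i = th i + 2 * pi * of_int (\<alpha> i)) \<and>
                 (\<forall>e\<in>E. k' e = k e + Bmul n \<alpha> e)))))"
proof (intro conjI allI impI)
  fix th :: "nat \<Rightarrow> real"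
  show "Xset n E z y V0 s (hS P Q) (hI th P Q l) (hV th v) (hs0 p0 q0) \<longleftrightarrow>
        (\<exists>k. solves n E (beta z V0 P Q v) th k)"
    by (rule Xset_h_iff_solves [OF graph V0_pos yhat])
next
  assume "\<exists>th k. solves n E (beta z V0 P Q v) th k"
  then obtain th0 k0 where "solves n E (beta z V0 P Q v) th0 k0"
    by blast
  then obtain th k where sol: "solves n E (beta z V0 P Q v) th k"
    and principal: "\<forall>i\<in>{1..n}. - pi < th i \<and> th i \<le> pi"
    by (rule solves_principal_angles)
  show "\<exists>th k. solves n E (beta z V0 P Q v) th k \<and> (\<forall>i\<in>{1..n}. - pi < th i \<and> th i \<le> pi) \<and>
          (\<forall>th' k'. solves n E (beta z V0 P Q v) th' k' \<longleftrightarrow>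
             (\<exists>\<alpha> :: nat \<Rightarrow> int. (\<forall>i\<in>{1..n}. th' i = th i + 2 * pi * of_int (\<alpha> i)) \<and>
                                (\<forall>e\<in>E. k' e = k e + Bmul n \<alpha> e)))"
    using sol principal solves_iff_shift [OF graph sol] by blast
qed

end
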